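(* For every $(w_1,w_2)\in\mathcal{A}$ the equation $f(X):=X-f_1(f_2(X))=0$ admits a unique positive solution $X_0$. Consequently, setting $e^{c_1}=X_0$ and $e^{c_2}=f_2(X_0)$, the pair $v_i=w_i+c_i$ ($i=1,2$) satisfies $$(N-1+\kappa)\int_\Omega e^{2u_1^0+2v_1}-N\int_\Omega e^{u_1^0+v_1}-(\kappa-1)\int_\Omega e^{u_1^0+u_2^0+v_1+v_2}+\frac{b_1}{\lambda}=0,$$ $$\Big(\frac1{N-1}+\kappa\Big)\int_\Omega e^{2u_2^0+2v_2}-\frac N{N-1}\int_\Omega e^{u_2^0+v_2}-(\kappa-1)\int_\Omega e^{u_1^0+u_2^0+v_1+v_2}+\frac{b_2}{\lambda}=0.$$
   Context: Standing setting (doubly periodic case): $N\ge2$ integer, $\kappa>1$, $\lambda>0$; $\Omega$ a doubly periodic domain (flat torus) of area $|\Omega|$; integers $n_1,n_2\ge0$ and points $p_{is}\in\Omega$. $W^{1,2}(\Omega)$ = $\Omega$-periodic $L^2$ functions with $L^2$ gradient, $\dot W^{1,2}(\Omega)=\{w\in W^{1,2}(\Omega):\int_\Omega w=0\}$. $u_i^0$ solves $\Delta u_i^0=4\pi\sum_{s=1}^{n_i}\delta_{p_{is}}-\frac{4\pi n_i}{|\Omega|}$, $\int_\Omega u_i^0=0$. Set $b_1=\frac{4\pi((1+(N-1)\kappa)n_1+(\kappa-1)n_2)}{\kappa}$, $b_2=\frac{4\pi((N-1)(\kappa-1)n_1+(N-1+\kappa)n_2)}{(N-1)\kappa}$. The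 admissible set $\mathcal A$ is the set of $(w_1,w_2)\in\dot W^{1,2}(\Omega)\times\dot W^{1,2}(\Omega)$ with $$\Big(\int_\Omega e^{u_1^0+w_1}\Big)^2\ge\frac{4(N-1+\kappa)b_1}{N^2\lambda}\int_\Omega e^{2u_1^0+2w_1},\qquad \Big(\int_\Omega e^{u_2^0+w_2}\Big)^2\ge\frac{4(N-1)(1+(N-1)\kappa)b_2}{N^2\lambda}\int_\Omega e^{2u_2^0+2w_2}.$$ For $(w_1,w_2)\in\mathcal A$ and $X,Y\ge0$ let $E_{12}=\int_\Omega e^{u_1^0+u_2^0+w_1+w_2}$, $P_1(Y)=N\int_\Omega e^{u_1^0+w_1}+(\kappa-1)YE_{12}$, $P_2(X)=\frac N{N-1}\int_\Omega e^{u_2^0+w_2}+(\kappa-1)XE_{12}$, $$f_1(Y)=\frac{P_1(Y)+\sqrt{P_1(Y)^2-\frac{4(N-1+\kappa)b_1}{\lambda}\int_\Omega e^{2u_1^0+2w_1}}}{2(N-1+\kappa)\int_\Omega e^{2u_1^0+2w_1}},\quad f_2(X)=\frac{P_2(X)+\sqrt{P_2(X)^2-\frac{4(1+(N-1)\kappa)b_2}{(N-1)\lambda}\int_\Omega e^{2u_2^0+2w_2}}}{2\big(\frac1{N-1}+\kappa\big)\int_\Omega e^{2u_2^0+2w_2}}.$$ *)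

theory Defs
  imports "HOL-Analysis.Analysis"
begin

type_synonym pt = "real \<times> real"

text \<open>The flat torus: lattice generated by w1, w2 (linearly independent); the fundamental cell.\<close>
definition lattice_ok :: "pt \<Rightarrow> pt \<Rightarrow> bool" where
  "lattice_ok w1 w2 \<longleftrightarrow> fst w1 * snd w2 - snd w1 * fst w2 \<noteq> 0"

definition cell :: "pt \<Rightarrow> pt \<Rightarrow> pt set" where
  "cell w1 w2 = {s *\<^sub>R w1 + t *\<^sub>R w2 | s t. 0 \<le> s \<and> s < 1 \<and> 0 \<le> t \<and> t < 1}"

definition area :: "pt \<Rightarrow> pt \<Rightarrow> real" where
  "area w1 w2 = measure lborel (cell w1 w2)"

definition periodic2 :: "pt \<Rightarrow> pt \<Rightarrow> (pt \<Rightarrow> real) \<Rightarrow> bool" where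
  "periodic2 w1 w2 f \<longleftrightarrow> (\<forall>x. f (x + w1) = f x \<and> f (x + w2) = f x)"

definition cint :: "pt \<Rightarrow> pt \<Rightarrow> (pt \<Rightarrow> real) \<Rightarrow> real" where
  "cint w1 w2 f = (LINT x : cell w1 w2 | lborel. f x)"

definition part1 :: "(pt \<Rightarrow> real) \<Rightarrow> pt \<Rightarrow> real" where
  "part1 f p = deriv (\<lambda>t. f (t, snd p)) (fst p)"

definition part2 :: "(pt \<Rightarrow> real) \<Rightarrow> pt \<Rightarrow> real" where
  "part2 f p = deriv (\<lambda>t. f (fst p, t)) (snd p)"

definition C1fun :: "(pt \<Rightarrow> real) \<Rightarrow> bool" where
  "C1fun f \<longleftrightarrow> continuous_on UNIV f \<and>
     (\<forall>p. (\<lambda>t. f (t, snd p)) differentiable (at (fst p)) \<and>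
          (\<lambda>t. f (fst p, t)) differentiable (at (snd p))) \<and>
     continuous_on UNIV (part1 f) \<and> continuous_on UNIV (part2 f)"

definition C2fun :: "(pt \<Rightarrow> real) \<Rightarrow> bool" where
  "C2fun f \<longleftrightarrow> C1fun f \<and> C1fun (part1 f) \<and> C1fun (part2 f)"

definition lap :: "(pt \<Rightarrow> real) \<Rightarrow> pt \<Rightarrow> real" where
  "lap f p = part1 (part1 f) p + part2 (part2 f) p"

definition L2per :: "pt \<Rightarrow> pt \<Rightarrow> (pt \<Rightarrow> real) \<Rightarrow> bool" where
  "L2per w1 w2 f \<longleftrightarrow> periodic2 w1 w2 f \<and> f \<in> borel_measurable lborel \<and>
     set_integrable lborel (cell w1 w2) (\<lambda>x. (f x)\<^sup>2)"

definition W12 :: "pt \<Rightarrow> pt \<Rightarrow> (pt \<Rightarrow> real) \<Rightarrow> bool" where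
  "W12 w1 w2 f \<longleftrightarrow> L2per w1 w2 f \<and>
     (\<exists>g1 g2. L2per w1 w2 g1 \<and> L2per w1 w2 g2 \<and>
       (\<forall>\<phi>. C1fun \<phi> \<and> periodic2 w1 w2 \<phi> \<longrightarrow>
          cint w1 w2 (\<lambda>x. f x * part1 \<phi> x) = - cint w1 w2 (\<lambda>x. g1 x * \<phi> x) \<and>
          cint w1 w2 (\<lambda>x. f x * part2 \<phi> x) = - cint w1 w2 (\<lambda>x. g2 x * \<phi> x)))"

definition W12dot :: "pt \<Rightarrow> pt \<Rightarrow> (pt \<Rightarrow> real) \<Rightarrow> bool" where
  "W12dot w1 w2 f \<longleftrightarrow> W12 w1 w2 f \<and> cint w1 w2 f = 0"

text \<open>u solves  Delta u = 4 pi sum_{s=1..n} delta_{p s} - 4 pi n/|Omega|  (weakly, on the torus), int u = 0.\<close>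
definition u0_sol :: "pt \<Rightarrow> pt \<Rightarrow> nat \<Rightarrow> (nat \<Rightarrow> pt) \<Rightarrow> (pt \<Rightarrow> real) \<Rightarrow> bool" where
  "u0_sol w1 w2 n p u \<longleftrightarrow> periodic2 w1 w2 u \<and> u \<in> borel_measurable lborel \<and>
     set_integrable lborel (cell w1 w2) u \<and> cint w1 w2 u = 0 \<and>
     (\<forall>\<phi>. C2fun \<phi> \<and> periodic2 w1 w2 \<phi> \<longrightarrow>
        cint w1 w2 (\<lambda>x. u x * lap \<phi> x) =
          4 * pi * (\<Sum>s = 1..n. \<phi> (p s)) - 4 * pi * real n / area w1 w2 * cint w1 w2 \<phi>)"

definition bb1 :: "nat \<Rightarrow> real \<Rightarrow> nat \<Rightarrow> nat \<Rightarrow> real" where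
  "bb1 N \<kappa> n1 n2 = 4 * pi * ((1 + (real N - 1) * \<kappa>) * real n1 + (\<kappa> - 1) * real n2) / \<kappa>"

definition bb2 :: "nat \<Rightarrow> real \<Rightarrow> nat \<Rightarrow> nat \<Rightarrow> real" where
  "bb2 N \<kappa> n1 n2 = 4 * pi * ((real N - 1) * (\<kappa> - 1) * real n1 + (real N - 1 + \<kappa>) * real n2)
                     / ((real N - 1) * \<kappa>)"

definition admissible ::
  "nat \<Rightarrow> real \<Rightarrow> real \<Rightarrow> pt \<Rightarrow> pt \<Rightarrow> nat \<Rightarrow> nat \<Rightarrow> (pt \<Rightarrow> real) \<Rightarrow> (pt \<Rightarrow> real)
    \<Rightarrow> (pt \<Rightarrow> real) \<Rightarrow> (pt \<Rightarrow> real) \<Rightarrow> bool" where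
  "admissible N \<kappa> lam w1 w2 n1 n2 u1 u2 v1 v2 \<longleftrightarrow>
     W12dot w1 w2 v1 \<and> W12dot w1 w2 v2 \<and>
     (cint w1 w2 (\<lambda>x. exp (u1 x + v1 x)))\<^sup>2 \<ge>
        4 * (real N - 1 + \<kappa>) * bb1 N \<kappa> n1 n2 / ((real N)\<^sup>2 * lam) *
          cint w1 w2 (\<lambda>x. exp (2 * u1 x + 2 * v1 x)) \<and>
     (cint w1 w2 (\<lambda>x. exp (u2 x + v2 x)))\<^sup>2 \<ge>
        4 * (real N - 1) * (1 + (real N - 1) * \<kappa>) * bb2 N \<kappa> n1 n2 / ((real N)\<^sup>2 * lam) *
          cint w1 w2 (\<lambda>x. exp (2 * u2 x + 2 * v2 x))"

text \<open>f_1(Y), f_2(X) in terms of the integrals A_i = int e^{u_i+w_i}, B_i = int e^{2u_i+2w_i}, E = E_12.\<close>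
definition ff1 :: "nat \<Rightarrow> real \<Rightarrow> real \<Rightarrow> real \<Rightarrow> real \<Rightarrow> real \<Rightarrow> real \<Rightarrow> real \<Rightarrow> real" where
  "ff1 N \<kappa> lam b1 A1 B1 E Y =
     (let P = real N * A1 + (\<kappa> - 1) * Y * E in
      (P + sqrt (P\<^sup>2 - 4 * (real N - 1 + \<kappa>) * b1 / lam * B1)) / (2 * (real N - 1 + \<kappa>) * B1))"

definition ff2 :: "nat \<Rightarrow> real \<Rightarrow> real \<Rightarrow> real \<Rightarrow> real \<Rightarrow> real \<Rightarrow> real \<Rightarrow> real \<Rightarrow> real" where
  "ff2 N \<kappa> lam b2 A2 B2 E X =
     (let P = real N / (real N - 1) * A2 + (\<kappa> - 1) * X * E in
      (P + sqrt (P\<^sup>2 - 4 * (1 + (real N - 1) * \<kappa>) * b2 / ((real N - 1) * lam) * B2))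
        / (2 * (1 / (real N - 1) + \<kappa>) * B2))"

end

theory Submission
  imports Defs
begin

text \<open>
  \<open>f\<^sub>1\<close> and \<open>f\<^sub>2\<close> are larger roots of quadratics \<open>a z\<^sup>2 - P z + c = 0\<close> whose middle
  coefficient \<open>P\<close> is affine in the other unknown. As a function of \<open>P\<close> the larger root is
  nondecreasing, concave and lies between \<open>P / (2a)\<close> and \<open>P / a\<close>. Consequently
  \<open>F = f\<^sub>1 \<circ> f\<^sub>2\<close> satisfies \<open>F 0 > 0\<close>, is strictly subhomogeneous
  (\<open>t F X < F (t X)\<close> for \<open>0 < t < 1\<close>), and grows at most like \<open>\<alpha> + \<beta> X\<close> with
  \<open>\<beta> = (\<kappa> - 1)\<^sup>2 E\<^sub>1\<^sub>2\<^sup>2 / (a\<^sub>1 a\<^sub>2) < 1\<close> (\<open>a\<^sub>i\<close> the leading coefficients),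
  by Cauchy--Schwarz. The intermediate value
  theorem yields a positive fixed point, and strict subhomogeneity makes it unique. Shifting
  \<open>w\<^sub>i\<close> by constants \<open>c\<^sub>i\<close> multiplies the integrals by powers of \<open>exp c\<^sub>i\<close>, which turns
  the fixed point into a simultaneous root of the two quadratics.
\<close>

lemma set_integral_pos:
  fixes g :: "'a \<Rightarrow> real"
  assumes int: "set_integrable M C g" and C: "C \<in> sets M" and pos_measure: "emeasure M C \<noteq> 0"
    and pos: "\<And>x. x \<in> C \<Longrightarrow> 0 < g x"
  shows "0 < (LINT x:C|M. g x)"
proof -
  have nonneg: "AE x in M. 0 \<le> indicator C x *\<^sub>R g x"
    using pos by (auto simp: indicator_def less_imp_le)
  have int': "integrable M (\<lambda>x. indicator C x *\<^sub>R g x)"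
    using int unfolding set_integrable_def .
  have "(LINT x:C|M. g x) \<noteq> 0"
  proof
    assume "(LINT x:C|M. g x) = 0"
    then have "AE x in M. indicator C x *\<^sub>R g x = 0"
      using integral_nonneg_eq_0_iff_AE[OF int' nonneg] by (simp add: set_lebesgue_integral_def)
    then have "AE x in M. x \<notin> C"
      by (rule AE_mp) (auto intro!: AE_I2 dest: pos)
    then have "C \<in> null_sets M"
      using C by (subst AE_iff_null_sets) auto
    with pos_measure show False by auto
  qed
  moreover have "0 \<le> (LINT x:C|M. g x)"
    using nonneg by (simp add: set_lebesgue_integral_def integral_nonneg_AE)
  ultimately show ?thesis by linarith
qed

lemma set_integrable_if_square_integrable:
  fixes f :: "'a \<Rightarrow> real"
  assumes [measurable]: "C \<in> sets M" "f \<in> borel_measurable M"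
    and finite: "emeasure M C < \<infinity>" and sq: "set_integrable M C (\<lambda>x. (f x)\<^sup>2)"
  shows "set_integrable M C f"
proof -
  have "set_integrable M C (\<lambda>x. (f x)\<^sup>2 + 1)"
    using sq finite by (intro set_integral_add(1)) (auto simp: set_integrable_def integrable_indicator)
  then show ?thesis
  proof (rule set_integrable_bound)
    show "set_borel_measurable M C f"
      unfolding set_borel_measurable_def by measurable
    have "\<bar>f x\<bar> \<le> (f x)\<^sup>2 + 1" for x
      using zero_le_power2[of "\<bar>f x\<bar> - 1/2"] by (simp add: power2_diff power2_abs power_divide)
    then show "AE x in M. x \<in> C \<longrightarrow> norm (f x) \<le> norm ((f x)\<^sup>2 + 1)"
      by auto
  qed
qed

lemma set_integral_Cauchy_Schwarz:
  fixes f g :: "'a \<Rightarrow> real"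
  assumes [measurable]: "C \<in> sets M" "f \<in> borel_measurable M" "g \<in> borel_measurable M"
    and nonneg: "\<And>x. 0 \<le> f x" "\<And>x. 0 \<le> g x"
    and f2: "set_integrable M C (\<lambda>x. (f x)\<^sup>2)" and g2: "set_integrable M C (\<lambda>x. (g x)\<^sup>2)"
  shows "(LINT x:C|M. f x * g x)\<^sup>2 \<le> (LINT x:C|M. (f x)\<^sup>2) * (LINT x:C|M. (g x)\<^sup>2)"
proof -
  have "set_integrable M C (\<lambda>x. ((f x)\<^sup>2 + (g x)\<^sup>2) / 2)"
    using f2 g2 by (intro set_integrable_divide set_integral_add(1))
  then have fg: "set_integrable M C (\<lambda>x. f x * g x)"
  proof (rule set_integrable_bound)
    show "set_borel_measurable M C (\<lambda>x. f x * g x)"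
      unfolding set_borel_measurable_def by measurable
    have "f x * g x \<le> ((f x)\<^sup>2 + (g x)\<^sup>2) / 2" for x
      using zero_le_power2[of "f x - g x"] by (simp add: power2_diff)
    then show "AE x in M. x \<in> C \<longrightarrow> norm (f x * g x) \<le> norm (((f x)\<^sup>2 + (g x)\<^sup>2) / 2)"
      using nonneg by auto
  qed
  have nn: "(\<integral>\<^sup>+x. ennreal (indicator C x * h x) \<partial>M) = ennreal (LINT x:C|M. h x)"
    if "set_integrable M C h" "\<And>x. 0 \<le> h x" for h :: "'a \<Rightarrow> real"
    using that unfolding set_integrable_def set_lebesgue_integral_def
    by (subst nn_integral_eq_integral) auto
  have int_nonneg: "0 \<le> (LINT x:C|M. h x)" if "\<And>x. 0 \<le> h x" for h :: "'a \<Rightarrow> real"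
    using that unfolding set_lebesgue_integral_def by (intro integral_nonneg_AE) simp
  define F where "F x = ennreal (indicator C x * f x)" for x
  define G where "G x = ennreal (indicator C x * g x)" for x
  have FG: "F x * G x = ennreal (indicator C x * (f x * g x))" for x
    unfolding F_def G_def using nonneg by (simp add: ennreal_mult[symmetric] split: split_indicator)
  have F2: "F x ^ 2 = ennreal (indicator C x * (f x)\<^sup>2)" for x
    unfolding F_def using nonneg by (simp add: ennreal_power split: split_indicator)
  have G2: "G x ^ 2 = ennreal (indicator C x * (g x)\<^sup>2)" for x
    unfolding G_def using nonneg by (simp add: ennreal_power split: split_indicator)
  have "ennreal ((LINT x:C|M. f x * g x)\<^sup>2) = (\<integral>\<^sup>+x. F x * G x \<partial>M)\<^sup>2"
    unfolding FG nn[OF fg mult_nonneg_nonneg[OF nonneg]]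
    using nonneg by (simp add: ennreal_power int_nonneg)
  also have "\<dots> \<le> (\<integral>\<^sup>+x. F x ^ 2 \<partial>M) * (\<integral>\<^sup>+x. G x ^ 2 \<partial>M)"
    unfolding F_def G_def by (rule Cauchy_Schwarz_nn_integral) auto
  also have "\<dots> = ennreal ((LINT x:C|M. (f x)\<^sup>2) * (LINT x:C|M. (g x)\<^sup>2))"
    unfolding F2 G2 nn[OF f2 zero_le_power2] nn[OF g2 zero_le_power2]
    by (simp add: ennreal_mult int_nonneg nonneg)
  finally show ?thesis
    using int_nonneg[of "\<lambda>x. (f x)\<^sup>2"] int_nonneg[of "\<lambda>x. (g x)\<^sup>2"] by simp
qed

lemma lattice_dual_basis:
  assumes "lattice_ok w1 w2"
  obtains l1 l2 :: "pt \<Rightarrow> real"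
  where "linear l1" "linear l2" "\<And>x. x = l1 x *\<^sub>R w1 + l2 x *\<^sub>R w2"
    "l1 w1 = 1" "l1 w2 = 0" "l2 w1 = 0" "l2 w2 = 1"
proof
  define d where "d = fst w1 * snd w2 - snd w1 * fst w2"
  have d: "d \<noteq> 0" using assms unfolding lattice_ok_def d_def .
  show "linear (\<lambda>x. (fst x * snd w2 - snd x * fst w2) / d)"
    "linear (\<lambda>x. (fst w1 * snd x - snd w1 * fst x) / d)"
    by (auto intro!: linearI simp: algebra_simps add_divide_distrib diff_divide_distrib)
  show "x = ((fst x * snd w2 - snd x * fst w2) / d) *\<^sub>R w1 + ((fst w1 * snd x - snd w1 * fst x) / d) *\<^sub>R w2"
    for x :: pt
  proof -
    have "(fst x * snd w2 - snd x * fst w2) * fst w1 + (fst w1 * snd x - snd w1 * fst x) * fst w2 = fst x * d"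
      "(fst x * snd w2 - snd x * fst w2) * snd w1 + (fst w1 * snd x - snd w1 * fst x) * snd w2 = snd x * d"
      unfolding d_def by algebra+
    then show ?thesis
      using d by (simp add: prod_eq_iff add_divide_distrib[symmetric])
  qed
  show "(fst w1 * snd w2 - snd w1 * fst w2) / d = 1" "(fst w2 * snd w2 - snd w2 * fst w2) / d = 0"
    "(fst w1 * snd w1 - snd w1 * fst w1) / d = 0" "(fst w1 * snd w2 - snd w1 * fst w2) / d = 1"
    using d by (simp_all add: d_def mult.commute)
qed

lemma cell_eq_dual_coordinates:
  assumes l: "linear l1" "linear l2" and span: "\<And>x. x = l1 x *\<^sub>R w1 + l2 x *\<^sub>R w2"
    and dual: "l1 w1 = 1" "l1 w2 = 0" "l2 w1 = 0" "l2 w2 = 1"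
  shows "cell w1 w2 = {x. 0 \<le> l1 x \<and> l1 x < 1 \<and> 0 \<le> l2 x \<and> l2 x < 1}"
proof -
  have "l1 (s *\<^sub>R w1 + t *\<^sub>R w2) = s" "l2 (s *\<^sub>R w1 + t *\<^sub>R w2) = t" for s t
    using dual by (simp_all add: linear_add[OF l(1)] linear_add[OF l(2)] linear_scale[OF l(1)] linear_scale[OF l(2)])
  then show ?thesis
    unfolding cell_def by (auto intro: span)
qed

lemma bounded_cell: "bounded (cell w1 w2)"
proof -
  have "norm x \<le> norm w1 + norm w2" if x: "x \<in> cell w1 w2" for x
  proof -
    obtain s t where st: "0 \<le> s" "s < 1" "0 \<le> t" "t < 1" "x = s *\<^sub>R w1 + t *\<^sub>R w2"
      using x unfolding cell_def by auto
    have "norm x \<le> s * norm w1 + t * norm w2"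
      using st norm_triangle_ineq[of "s *\<^sub>R w1" "t *\<^sub>R w2"] by simp
    also have "\<dots> \<le> norm w1 + norm w2"
      using st by (intro add_mono mult_left_le_one_le) auto
    finally show ?thesis .
  qed
  then show ?thesis
    unfolding bounded_iff by blast
qed

lemma
  assumes "lattice_ok w1 w2"
  shows sets_lborel_cell: "cell w1 w2 \<in> sets lborel"
    and emeasure_cell_finite: "emeasure lborel (cell w1 w2) < \<infinity>"
    and emeasure_cell_nonzero: "emeasure lborel (cell w1 w2) \<noteq> 0"
proof -
  obtain l1 l2 where l: "linear l1" "linear l2" "\<And>x. x = l1 x *\<^sub>R w1 + l2 x *\<^sub>R w2"
    and dual: "l1 w1 = 1" "l1 w2 = 0" "l2 w1 = 0" "l2 w2 = 1"
    using lattice_dual_basis[OF assms] by blast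
  note cell = cell_eq_dual_coordinates[OF l dual]
  have cont: "continuous_on UNIV l1" "continuous_on UNIV l2"
    using l by (auto intro: linear_continuous_on linear_conv_bounded_linear[THEN iffD1])
  then have [measurable]: "l1 \<in> borel_measurable borel" "l2 \<in> borel_measurable borel"
    by (auto intro: borel_measurable_continuous_onI)
  have "{x \<in> space lborel. 0 \<le> l1 x \<and> l1 x < 1 \<and> 0 \<le> l2 x \<and> l2 x < 1} \<in> sets lborel"
    by measurable
  then show "cell w1 w2 \<in> sets lborel"
    unfolding cell by simp
  show "emeasure lborel (cell w1 w2) < \<infinity>"
    using bounded_cell by (rule emeasure_bounded_finite)
  define U where "U = {x. 0 < l1 x \<and> l1 x < 1 \<and> 0 < l2 x \<and> l2 x < 1}"
  define m where "m = (w1 + w2) /\<^sub>R 2"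
  have "open U"
    unfolding U_def using cont by (intro open_Collect_conj open_Collect_less continuous_intros) auto
  moreover have "m \<in> U"
    unfolding U_def m_def using dual by (simp add: linear_add[OF l(1)] linear_add[OF l(2)] linear_scale[OF l(1)] linear_scale[OF l(2)])
  ultimately obtain r where r: "0 < r" "ball m r \<subseteq> U"
    by (meson open_contains_ball)
  have "emeasure lborel (ball m r) \<noteq> 0"
    using content_ball_pos[OF r(1), of m] by (auto simp: measure_def)
  moreover have "emeasure lborel (ball m r) \<le> emeasure lborel (cell w1 w2)"
    using r(2) \<open>cell w1 w2 \<in> sets lborel\<close> unfolding cell U_def by (intro emeasure_mono) auto
  ultimately show "emeasure lborel (cell w1 w2) \<noteq> 0"
    by (metis le_zero_eq)
qed

section \<open>A fixed-point principle\<close>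

lemma unique_positive_fixed_point:
  fixes F :: "real \<Rightarrow> real"
  assumes cont: "continuous_on {0..} F"
    and pos: "0 < F 0"
    and subhomogeneous: "\<And>X t. 0 \<le> X \<Longrightarrow> 0 < t \<Longrightarrow> t < 1 \<Longrightarrow> t * F X < F (t * X)"
    and affine_bound: "\<And>X. 0 \<le> X \<Longrightarrow> F X \<le> \<alpha> + \<beta> * X" and "\<beta> < 1"
  shows "\<exists>!X. 0 < X \<and> F X = X"
proof (rule ex_ex1I)
  define M where "M = \<alpha> / (1 - \<beta>)"
  have "0 < \<alpha>"
    using pos affine_bound[of 0] by simp
  then have "0 < M" "\<alpha> + \<beta> * M = M"
    unfolding M_def using \<open>\<beta> < 1\<close> by (auto simp: field_simps)
  then have "F M \<le> M"
    using affine_bound[of M] by simp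
  moreover have "continuous_on {0..M} (\<lambda>X. X - F X)"
    by (intro continuous_intros continuous_on_subset[OF cont]) auto
  ultimately obtain X where X: "0 \<le> X" "X \<le> M" "X - F X = 0"
    using IVT'[of "\<lambda>X. X - F X" 0 0 M] pos \<open>0 < M\<close> by auto
  moreover have "X \<noteq> 0"
    using X pos by auto
  ultimately show "\<exists>X. 0 < X \<and> F X = X"
    by (metis less_eq_real_def eq_iff_diff_eq_0)
next
  \<comment> \<open>two fixed points \<open>X < Y\<close> would give \<open>X = F (t * Y) > t * F Y = X\<close> with \<open>t = X / Y\<close>\<close>
  have "\<not> (0 < X \<and> X < Y \<and> F X = X \<and> F Y = Y)" for X Y
  proof
    assume XY: "0 < X \<and> X < Y \<and> F X = X \<and> F Y = Y"
    then have "X = X / Y * F Y"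
      by simp
    also have "\<dots> < F (X / Y * Y)"
      using XY by (intro subhomogeneous) auto
    also have "\<dots> = X"
      using XY by simp
    finally show False
      by simp
  qed
  then show "X = Y" if "0 < X \<and> F X = X" "0 < Y \<and> F Y = Y" for X Y
    using that by (metis linorder_neqE_linordered_idom)
qed

section \<open>The larger root of a quadratic\<close>

definition larger_root :: "real \<Rightarrow> real \<Rightarrow> real \<Rightarrow> real" where
  "larger_root a c P = (P + sqrt (P\<^sup>2 - 4 * a * c)) / (2 * a)"

lemma larger_root_eq:
  assumes "a \<noteq> 0" "4 * a * c \<le> P\<^sup>2"
  shows "a * (larger_root a c P)\<^sup>2 - P * larger_root a c P + c = 0"
proof -
  define s where "s = sqrt (P\<^sup>2 - 4 * a * c)"
  have s: "s\<^sup>2 = P\<^sup>2 - 4 * a * c"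
    unfolding s_def using assms(2) by simp
  have "a * ((P + s) / (2 * a))\<^sup>2 - P * ((P + s) / (2 * a)) + c = (s\<^sup>2 - (P\<^sup>2 - 4 * a * c)) / (4 * a)"
    using assms(1) by (simp add: field_simps power2_eq_square)
  then show ?thesis
    unfolding larger_root_def s_def[symmetric] s by simp
qed

lemma larger_root_lower:
  assumes "0 < a" "4 * a * c \<le> P\<^sup>2"
  shows "P / (2 * a) \<le> larger_root a c P"
  unfolding larger_root_def using assms by (intro divide_right_mono) auto

lemma larger_root_upper:
  assumes "0 < a" "0 \<le> c" "0 \<le> P"
  shows "larger_root a c P \<le> P / a"
proof -
  have "sqrt (P\<^sup>2 - 4 * a * c) \<le> sqrt (P\<^sup>2)"
    using assms by (intro real_sqrt_le_mono) simp
  then have "P + sqrt (P\<^sup>2 - 4 * a * c) \<le> 2 * P"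
    using assms(3) by simp
  then show ?thesis
    unfolding larger_root_def using assms(1) by (simp add: divide_simps)
qed

lemma larger_root_mono:
  assumes "0 < a" "0 \<le> P" "4 * a * c \<le> P\<^sup>2" "P \<le> Q"
  shows "larger_root a c P \<le> larger_root a c Q"
proof -
  have "P\<^sup>2 \<le> Q\<^sup>2"
    using assms by (intro power_mono) auto
  then show ?thesis
    unfolding larger_root_def using assms by (intro divide_right_mono add_mono) auto
qed

lemma sqrt_square_diff_concave:
  fixes K P Q t :: real
  assumes "0 \<le> K" "0 \<le> P" "0 \<le> Q" "K \<le> P\<^sup>2" "K \<le> Q\<^sup>2" "0 \<le> t" "t \<le> 1"
  shows "t * sqrt (P\<^sup>2 - K) + (1 - t) * sqrt (Q\<^sup>2 - K) \<le> sqrt ((t * P + (1 - t) * Q)\<^sup>2 - K)"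
proof -
  define a where "a = sqrt (P\<^sup>2 - K)"
  define b where "b = sqrt (Q\<^sup>2 - K)"
  have a: "0 \<le> a" "a\<^sup>2 = P\<^sup>2 - K" unfolding a_def using assms by auto
  have b: "0 \<le> b" "b\<^sup>2 = Q\<^sup>2 - K" unfolding b_def using assms by auto
  have PQ: "K \<le> P * Q"
  proof (cases "P \<le> Q")
    case True
    then have "P\<^sup>2 \<le> P * Q" using assms by (simp add: power2_eq_square mult_left_mono)
    then show ?thesis using assms by simp
  next
    case False
    then have "Q\<^sup>2 \<le> P * Q" using assms by (simp add: power2_eq_square mult_right_mono)
    then show ?thesis using assms by simp
  qed
  have "(a * b)\<^sup>2 = (P\<^sup>2 - K) * (Q\<^sup>2 - K)"
    using a(2) b(2) by (simp add: power_mult_distrib)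
  also have "\<dots> = (P * Q - K)\<^sup>2 - K * (P - Q)\<^sup>2"
    by (simp add: power2_eq_square algebra_simps)
  finally have "(a * b)\<^sup>2 = (P * Q - K)\<^sup>2 - K * (P - Q)\<^sup>2" .
  then have "(a * b)\<^sup>2 \<le> (P * Q - K)\<^sup>2"
    using assms(1) by simp
  then have ab: "a * b \<le> P * Q - K"
    by (rule power2_le_imp_le) (use PQ in linarith)
  have "(t * a + (1 - t) * b)\<^sup>2 = t\<^sup>2 * a\<^sup>2 + (1 - t)\<^sup>2 * b\<^sup>2 + 2 * (t * (1 - t)) * (a * b)"
    by (simp add: power2_eq_square algebra_simps)
  also have "\<dots> \<le> t\<^sup>2 * a\<^sup>2 + (1 - t)\<^sup>2 * b\<^sup>2 + 2 * (t * (1 - t)) * (P * Q - K)"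
    using ab assms by (intro add_left_mono mult_left_mono) auto
  also have "\<dots> = (t * P + (1 - t) * Q)\<^sup>2 - K"
    unfolding a b by (simp add: power2_eq_square algebra_simps)
  finally show ?thesis
    unfolding a_def[symmetric] b_def[symmetric] by (rule real_le_rsqrt)
qed

lemma larger_root_concave:
  assumes "0 < a" "0 \<le> c" "0 \<le> P" "0 \<le> Q" "4 * a * c \<le> P\<^sup>2" "4 * a * c \<le> Q\<^sup>2" "0 \<le> t" "t \<le> 1"
  shows "t * larger_root a c P + (1 - t) * larger_root a c Q \<le> larger_root a c (t * P + (1 - t) * Q)"
proof -
  have "t * larger_root a c P + (1 - t) * larger_root a c Q =
      (t * P + (1 - t) * Q + (t * sqrt (P\<^sup>2 - 4 * a * c) + (1 - t) * sqrt (Q\<^sup>2 - 4 * a * c))) / (2 * a)"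
    unfolding larger_root_def using assms(1) by (simp add: field_simps)
  also have "\<dots> \<le> larger_root a c (t * P + (1 - t) * Q)"
    unfolding larger_root_def using assms
    by (intro divide_right_mono add_left_mono sqrt_square_diff_concave) auto
  finally show ?thesis .
qed

lemma le_power2_mono:
  fixes x p P :: real
  assumes "x \<le> p\<^sup>2" "0 \<le> p" "p \<le> P"
  shows "x \<le> P\<^sup>2"
  using assms power_mono[of p P 2] by linarith

lemma larger_root_affine_concave:
  assumes "0 < a" "0 \<le> c" "0 \<le> p" "0 \<le> q" "4 * a * c \<le> p\<^sup>2" "0 \<le> Y" "0 \<le> t" "t \<le> 1"
  shows "t * larger_root a c (p + q * Y) + (1 - t) * larger_root a c p \<le> larger_root a c (p + q * (t * Y))"
proof -
  have "4 * a * c \<le> (p + q * Y)\<^sup>2"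
    by (rule le_power2_mono[of _ p]) (use assms in auto)
  then have "t * larger_root a c (p + q * Y) + (1 - t) * larger_root a c p
      \<le> larger_root a c (t * (p + q * Y) + (1 - t) * p)"
    using assms by (intro larger_root_concave) auto
  also have "t * (p + q * Y) + (1 - t) * p = p + q * (t * Y)"
    by (simp add: algebra_simps)
  finally show ?thesis .
qed

lemma larger_root_composition_unique_fixed_point:
  assumes a: "0 < a1" "0 < a2" and c: "0 \<le> c1" "0 \<le> c2" and p: "0 < p1" "0 \<le> p2"
    and q: "0 \<le> q" "q\<^sup>2 < a1 * a2"
    and disc: "4 * a1 * c1 \<le> p1\<^sup>2" "4 * a2 * c2 \<le> p2\<^sup>2"
  shows "\<exists>!X. 0 < X \<and> larger_root a1 c1 (p1 + q * larger_root a2 c2 (p2 + q * X)) = X"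
proof -
  define f1 where "f1 Y = larger_root a1 c1 (p1 + q * Y)" for Y
  define f2 where "f2 X = larger_root a2 c2 (p2 + q * X)" for X
  have disc1: "4 * a1 * c1 \<le> (p1 + q * Y)\<^sup>2" if "0 \<le> Y" for Y
    by (rule le_power2_mono[OF disc(1)]) (use p q that in auto)
  have disc2: "4 * a2 * c2 \<le> (p2 + q * X)\<^sup>2" if "0 \<le> X" for X
    by (rule le_power2_mono[OF disc(2)]) (use p q that in auto)
  have f1_pos: "0 < f1 Y" if "0 \<le> Y" for Y
  proof -
    have "0 < p1 / (2 * a1)"
      using a p by simp
    also have "\<dots> \<le> (p1 + q * Y) / (2 * a1)"
      using a q that by (intro divide_right_mono) auto
    also have "\<dots> \<le> f1 Y"
      unfolding f1_def using a(1) disc1[OF that] by (rule larger_root_lower)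
    finally show ?thesis .
  qed
  have f2_nonneg: "0 \<le> f2 X" if "0 \<le> X" for X
  proof -
    have "0 \<le> (p2 + q * X) / (2 * a2)"
      using a p q that by simp
    also have "\<dots> \<le> f2 X"
      unfolding f2_def using a(2) disc2[OF that] by (rule larger_root_lower)
    finally show ?thesis .
  qed
  have f1_mono: "f1 Y \<le> f1 Y'" if "0 \<le> Y" "Y \<le> Y'" for Y Y'
    unfolding f1_def using a p q disc that
    by (intro larger_root_mono disc1 add_left_mono mult_left_mono) auto
  have subhomogeneous: "t * f1 (f2 X) < f1 (f2 (t * X))" if "0 \<le> X" "0 < t" "t < 1" for X t
  proof -
    have "t * f1 (f2 X) < t * f1 (f2 X) + (1 - t) * f1 0"
      using f1_pos[of 0] that by simp
    also have "\<dots> \<le> f1 (t * f2 X)"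
      unfolding f1_def mult_zero_right add_0_right using a c p q disc that f2_nonneg[of X]
      by (intro larger_root_affine_concave) auto
    also have "\<dots> \<le> f1 (f2 (t * X))"
    proof (intro f1_mono)
      have "t * f2 X \<le> t * f2 X + (1 - t) * f2 0"
        using f2_nonneg[of 0] that by simp
      also have "\<dots> \<le> f2 (t * X)"
        unfolding f2_def mult_zero_right add_0_right using a c p q disc that
        by (intro larger_root_affine_concave) auto
      finally show "t * f2 X \<le> f2 (t * X)" .
    qed (use that f2_nonneg[of X] in simp)
    finally show ?thesis .
  qed
  have affine_bound: "f1 (f2 X) \<le> p1 / a1 + q * p2 / (a1 * a2) + q\<^sup>2 / (a1 * a2) * X" if "0 \<le> X" for X
  proof -
    have "f1 (f2 X) \<le> (p1 + q * f2 X) / a1"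
      unfolding f1_def using a c p q f2_nonneg[OF that] by (intro larger_root_upper) auto
    also have "\<dots> \<le> (p1 + q * ((p2 + q * X) / a2)) / a1"
      unfolding f2_def using a c p q that
      by (intro divide_right_mono add_left_mono mult_left_mono larger_root_upper) auto
    also have "\<dots> = p1 / a1 + q * p2 / (a1 * a2) + q\<^sup>2 / (a1 * a2) * X"
      using a by (simp add: field_simps power2_eq_square)
    finally show ?thesis .
  qed
  have "continuous_on {0..} (\<lambda>X. f1 (f2 X))"
    unfolding f1_def f2_def larger_root_def using a by (intro continuous_intros) auto
  moreover have "q\<^sup>2 / (a1 * a2) < 1"
    using a q by simp
  ultimately have "\<exists>!X. 0 < X \<and> f1 (f2 X) = X"
    using f1_pos[OF f2_nonneg[of 0]] subhomogeneous affine_bound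
    by (intro unique_positive_fixed_point[where \<alpha> = "p1 / a1 + q * p2 / (a1 * a2)"]) auto
  then show ?thesis
    unfolding f1_def f2_def .
qed

section \<open>The fixed-point equation \<open>X = f\<^sub>1 (f\<^sub>2 X)\<close>\<close>

lemma bb1_nonneg: "1 < \<kappa> \<Longrightarrow> 2 \<le> N \<Longrightarrow> 0 \<le> bb1 N \<kappa> n1 n2"
  unfolding bb1_def by (intro divide_nonneg_pos mult_nonneg_nonneg add_nonneg_nonneg) auto

lemma bb2_nonneg: "1 < \<kappa> \<Longrightarrow> 2 \<le> N \<Longrightarrow> 0 \<le> bb2 N \<kappa> n1 n2"
  unfolding bb2_def by (intro divide_nonneg_pos mult_nonneg_nonneg add_nonneg_nonneg mult_pos_pos) auto

lemma ff1_eq_larger_root: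
  "ff1 N \<kappa> lam b A B E Y = larger_root ((real N - 1 + \<kappa>) * B) (b / lam) (real N * A + (\<kappa> - 1) * E * Y)"
proof -
  have "(\<kappa> - 1) * Y * E = (\<kappa> - 1) * E * Y"
    "4 * (real N - 1 + \<kappa>) * b / lam * B = 4 * ((real N - 1 + \<kappa>) * B) * (b / lam)"
    "2 * (real N - 1 + \<kappa>) * B = 2 * ((real N - 1 + \<kappa>) * B)"
    by simp_all
  then show ?thesis
    unfolding ff1_def larger_root_def Let_def by (simp only:)
qed

lemma ff2_eq_larger_root:
  assumes "real N \<noteq> 1"
  shows "ff2 N \<kappa> lam b A B E X =
    larger_root ((1 / (real N - 1) + \<kappa>) * B) (b / lam) (real N / (real N - 1) * A + (\<kappa> - 1) * E * X)"
proof -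
  have "(\<kappa> - 1) * X * E = (\<kappa> - 1) * E * X"
    "4 * (1 + (real N - 1) * \<kappa>) * b / ((real N - 1) * lam) * B = 4 * ((1 / (real N - 1) + \<kappa>) * B) * (b / lam)"
    "2 * (1 / (real N - 1) + \<kappa>) * B = 2 * ((1 / (real N - 1) + \<kappa>) * B)"
    using assms by (simp_all add: field_simps)
  then show ?thesis
    unfolding ff2_def larger_root_def Let_def by (simp only:)
qed

text \<open>Here \<open>A1\<close>, \<open>B1\<close>, \<open>A2\<close>, \<open>B2\<close>, \<open>E\<close> stand for the integrals of
  \<open>exp (u\<^sub>i + w\<^sub>i)\<close>, \<open>exp (2 u\<^sub>i + 2 w\<^sub>i)\<close> and \<open>exp (u\<^sub>1 + u\<^sub>2 + w\<^sub>1 + w\<^sub>2)\<close>;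
  \<open>E\<^sup>2 \<le> B1 * B2\<close> is Cauchy--Schwarz.\<close>

context
  fixes N :: nat and \<kappa> lam A1 B1 A2 B2 E b1 b2 :: real
  assumes N: "2 \<le> N" and kappa: "1 < \<kappa>" and lam: "0 < lam"
    and pos: "0 < A1" "0 < B1" "0 < A2" "0 < B2"
    and cross: "0 \<le> E" "E\<^sup>2 \<le> B1 * B2"
    and b: "0 \<le> b1" "0 \<le> b2"
    and adm1: "4 * (real N - 1 + \<kappa>) * b1 / ((real N)\<^sup>2 * lam) * B1 \<le> A1\<^sup>2"
    and adm2: "4 * (real N - 1) * (1 + (real N - 1) * \<kappa>) * b2 / ((real N)\<^sup>2 * lam) * B2 \<le> A2\<^sup>2"
begin

lemma ff_leading_coefficients_pos:
  "0 < (real N - 1 + \<kappa>) * B1" "0 < (1 / (real N - 1) + \<kappa>) * B2"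
proof -
  have "0 < 1 / (real N - 1)"
    using N by simp
  then show "0 < (real N - 1 + \<kappa>) * B1" "0 < (1 / (real N - 1) + \<kappa>) * B2"
    using N kappa pos by (auto intro!: mult_pos_pos add_pos_pos)
qed

lemma ff_discriminants:
  "4 * ((real N - 1 + \<kappa>) * B1) * (b1 / lam) \<le> (real N * A1)\<^sup>2"
  "4 * ((1 / (real N - 1) + \<kappa>) * B2) * (b2 / lam) \<le> (real N / (real N - 1) * A2)\<^sup>2"
proof -
  have N1: "0 < real N - 1" "0 < real N"
    using N by auto
  have "4 * ((real N - 1 + \<kappa>) * B1) * (b1 / lam)
      = (real N)\<^sup>2 * (4 * (real N - 1 + \<kappa>) * b1 / ((real N)\<^sup>2 * lam) * B1)"
    using N1 by (simp add: power2_eq_square)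
  also have "\<dots> \<le> (real N * A1)\<^sup>2"
    unfolding power_mult_distrib using adm1 by (intro mult_left_mono) auto
  finally show "4 * ((real N - 1 + \<kappa>) * B1) * (b1 / lam) \<le> (real N * A1)\<^sup>2" .
  have "4 * ((1 / (real N - 1) + \<kappa>) * B2) * (b2 / lam)
      = (real N / (real N - 1))\<^sup>2 * (4 * (real N - 1) * (1 + (real N - 1) * \<kappa>) * b2 / ((real N)\<^sup>2 * lam) * B2)"
    using N1 lam by (simp add: power2_eq_square divide_simps) algebra
  also have "\<dots> \<le> (real N / (real N - 1) * A2)\<^sup>2"
    unfolding power_mult_distrib using adm2 by (intro mult_left_mono) auto
  finally show "4 * ((1 / (real N - 1) + \<kappa>) * B2) * (b2 / lam) \<le> (real N / (real N - 1) * A2)\<^sup>2" .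
qed

lemma ff_coupling_bound:
  "((\<kappa> - 1) * E)\<^sup>2 < ((real N - 1 + \<kappa>) * B1) * ((1 / (real N - 1) + \<kappa>) * B2)"
proof -
  have "0 < 1 / (real N - 1)"
    using N by simp
  then have "\<kappa> - 1 < real N - 1 + \<kappa>" "\<kappa> - 1 < 1 / (real N - 1) + \<kappa>"
    using N by linarith+
  then have "(\<kappa> - 1)\<^sup>2 < (real N - 1 + \<kappa>) * (1 / (real N - 1) + \<kappa>)"
    unfolding power2_eq_square using kappa by (intro mult_strict_mono) auto
  then have "(\<kappa> - 1)\<^sup>2 * (B1 * B2) < (real N - 1 + \<kappa>) * (1 / (real N - 1) + \<kappa>) * (B1 * B2)"
    using pos by simp
  moreover have "((\<kappa> - 1) * E)\<^sup>2 \<le> (\<kappa> - 1)\<^sup>2 * (B1 * B2)"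
    using cross by (simp add: power_mult_distrib mult_left_mono)
  ultimately show ?thesis
    by (simp add: mult_ac)
qed

lemma ff_composition_unique_fixed_point:
  "\<exists>!X. 0 < X \<and> X - ff1 N \<kappa> lam b1 A1 B1 E (ff2 N \<kappa> lam b2 A2 B2 E X) = 0"
proof -
  have "real N \<noteq> 1"
    using N by simp
  then have fixed_point_iff: "(X - ff1 N \<kappa> lam b1 A1 B1 E (ff2 N \<kappa> lam b2 A2 B2 E X) = 0) \<longleftrightarrow>
      larger_root ((real N - 1 + \<kappa>) * B1) (b1 / lam) (real N * A1 + (\<kappa> - 1) * E *
        larger_root ((1 / (real N - 1) + \<kappa>) * B2) (b2 / lam) (real N / (real N - 1) * A2 + (\<kappa> - 1) * E * X)) = X"
    for X
    unfolding ff1_eq_larger_root ff2_eq_larger_root[OF \<open>real N \<noteq> 1\<close>] by linarith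
  show ?thesis
    unfolding fixed_point_iff using N kappa lam pos cross b ff_leading_coefficients_pos ff_coupling_bound ff_discriminants
    by (intro larger_root_composition_unique_fixed_point) auto
qed

lemma ff1_root:
  assumes "0 \<le> Y" and "X = ff1 N \<kappa> lam b1 A1 B1 E Y"
  shows "(real N - 1 + \<kappa>) * (X\<^sup>2 * B1) - real N * (X * A1) - (\<kappa> - 1) * (X * Y * E) + b1 / lam = 0"
proof -
  have N1: "0 < real N - 1" "0 < real N"
    using N by auto
  have "4 * ((real N - 1 + \<kappa>) * B1) * (b1 / lam) \<le> (real N * A1 + (\<kappa> - 1) * E * Y)\<^sup>2"
    by (rule le_power2_mono[OF ff_discriminants(1)]) (use pos kappa cross assms(1) in auto)
  then have "(real N - 1 + \<kappa>) * B1 * X\<^sup>2 - (real N * A1 + (\<kappa> - 1) * E * Y) * X + b1 / lam = 0"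
    unfolding assms(2) ff1_eq_larger_root using ff_leading_coefficients_pos by (intro larger_root_eq) auto
  then show ?thesis
    by (simp add: algebra_simps)
qed

lemma ff2_root:
  assumes "0 \<le> X" and "Y = ff2 N \<kappa> lam b2 A2 B2 E X"
  shows "(1 / (real N - 1) + \<kappa>) * (Y\<^sup>2 * B2) - real N / (real N - 1) * (Y * A2) - (\<kappa> - 1) * (X * Y * E) + b2 / lam = 0"
proof -
  have N1: "real N \<noteq> 1" "0 < real N - 1"
    using N by auto
  have "4 * ((1 / (real N - 1) + \<kappa>) * B2) * (b2 / lam) \<le> (real N / (real N - 1) * A2 + (\<kappa> - 1) * E * X)\<^sup>2"
    by (rule le_power2_mono[OF ff_discriminants(2)]) (use pos kappa cross N1 assms(1) in auto)
  then have "(1 / (real N - 1) + \<kappa>) * B2 * Y\<^sup>2 - (real N / (real N - 1) * A2 + (\<kappa> - 1) * E * X) * Y + b2 / lam = 0"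
    unfolding assms(2) ff2_eq_larger_root[OF N1(1)] using ff_leading_coefficients_pos by (intro larger_root_eq) auto
  then show ?thesis
    by (simp add: algebra_simps)
qed

end

lemma cell_exp_integrals_pos:
  assumes lat: "lattice_ok w1 w2" and [measurable]: "u \<in> borel_measurable lborel" "v \<in> borel_measurable lborel"
    and int: "set_integrable lborel (cell w1 w2) (\<lambda>x. exp (2 * u x + 2 * v x))"
  shows "0 < cint w1 w2 (\<lambda>x. exp (u x + v x))" "0 < cint w1 w2 (\<lambda>x. exp (2 * u x + 2 * v x))"
proof -
  note cell = sets_lborel_cell[OF lat] emeasure_cell_finite[OF lat] emeasure_cell_nonzero[OF lat]
  have "(exp (u x + v x))\<^sup>2 = exp (2 * u x + 2 * v x)" for x
    by (simp add: exp_double[symmetric] algebra_simps)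
  then have square_integrable: "set_integrable lborel (cell w1 w2) (\<lambda>x. (exp (u x + v x))\<^sup>2)"
    using int by simp
  have "set_integrable lborel (cell w1 w2) (\<lambda>x. exp (u x + v x))"
    by (rule set_integrable_if_square_integrable[OF cell(1) _ cell(2) square_integrable]) measurable
  then show "0 < cint w1 w2 (\<lambda>x. exp (u x + v x))"
    unfolding cint_def by (rule set_integral_pos[OF _ cell(1,3)]) simp
  show "0 < cint w1 w2 (\<lambda>x. exp (2 * u x + 2 * v x))"
    unfolding cint_def by (rule set_integral_pos[OF int cell(1,3)]) simp
qed

lemma cell_exp_cross_integral:
  assumes lat: "lattice_ok w1 w2"
    and [measurable]: "u1 \<in> borel_measurable lborel" "v1 \<in> borel_measurable lborel"
      "u2 \<in> borel_measurable lborel" "v2 \<in> borel_measurable lborel"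
    and int1: "set_integrable lborel (cell w1 w2) (\<lambda>x. exp (2 * u1 x + 2 * v1 x))"
    and int2: "set_integrable lborel (cell w1 w2) (\<lambda>x. exp (2 * u2 x + 2 * v2 x))"
  shows "0 \<le> cint w1 w2 (\<lambda>x. exp (u1 x + u2 x + v1 x + v2 x))"
    and "(cint w1 w2 (\<lambda>x. exp (u1 x + u2 x + v1 x + v2 x)))\<^sup>2
      \<le> cint w1 w2 (\<lambda>x. exp (2 * u1 x + 2 * v1 x)) * cint w1 w2 (\<lambda>x. exp (2 * u2 x + 2 * v2 x))"
proof -
  show "0 \<le> cint w1 w2 (\<lambda>x. exp (u1 x + u2 x + v1 x + v2 x))"
    unfolding cint_def set_lebesgue_integral_def by (intro integral_nonneg_AE) simp
  have split: "exp (u1 x + u2 x + v1 x + v2 x) = exp (u1 x + v1 x) * exp (u2 x + v2 x)"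
    and squares: "exp (2 * u1 x + 2 * v1 x) = (exp (u1 x + v1 x))\<^sup>2"
      "exp (2 * u2 x + 2 * v2 x) = (exp (u2 x + v2 x))\<^sup>2" for x
    by (simp_all add: exp_add[symmetric] exp_double[symmetric] algebra_simps)
  have "(LINT x:cell w1 w2|lborel. exp (u1 x + v1 x) * exp (u2 x + v2 x))\<^sup>2
      \<le> (LINT x:cell w1 w2|lborel. (exp (u1 x + v1 x))\<^sup>2) * (LINT x:cell w1 w2|lborel. (exp (u2 x + v2 x))\<^sup>2)"
    using int1 int2 unfolding squares
    by (intro set_integral_Cauchy_Schwarz[OF sets_lborel_cell[OF lat]]) auto
  then show "(cint w1 w2 (\<lambda>x. exp (u1 x + u2 x + v1 x + v2 x)))\<^sup>2
      \<le> cint w1 w2 (\<lambda>x. exp (2 * u1 x + 2 * v1 x)) * cint w1 w2 (\<lambda>x. exp (2 * u2 x + 2 * v2 x))"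
    unfolding cint_def split squares .
qed

lemma cint_exp_shift:
  "cint w1 w2 (\<lambda>x. exp (u x + (v x + c))) = exp c * cint w1 w2 (\<lambda>x. exp (u x + v x))"
  "cint w1 w2 (\<lambda>x. exp (2 * u x + 2 * (v x + c))) = (exp c)\<^sup>2 * cint w1 w2 (\<lambda>x. exp (2 * u x + 2 * v x))"
  "cint w1 w2 (\<lambda>x. exp (u1 x + u2 x + (v1 x + c1) + (v2 x + c2)))
    = exp c1 * exp c2 * cint w1 w2 (\<lambda>x. exp (u1 x + u2 x + v1 x + v2 x))"
proof -
  have "exp (u x + (v x + c)) = exp c * exp (u x + v x)"
    "exp (2 * u x + 2 * (v x + c)) = (exp c)\<^sup>2 * exp (2 * u x + 2 * v x)"
    "exp (u1 x + u2 x + (v1 x + c1) + (v2 x + c2)) = exp c1 * exp c2 * exp (u1 x + u2 x + v1 x + v2 x)"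
    for x
    by (simp_all add: exp_add[symmetric] exp_double[symmetric] algebra_simps)
  then show "cint w1 w2 (\<lambda>x. exp (u x + (v x + c))) = exp c * cint w1 w2 (\<lambda>x. exp (u x + v x))"
    "cint w1 w2 (\<lambda>x. exp (2 * u x + 2 * (v x + c))) = (exp c)\<^sup>2 * cint w1 w2 (\<lambda>x. exp (2 * u x + 2 * v x))"
    "cint w1 w2 (\<lambda>x. exp (u1 x + u2 x + (v1 x + c1) + (v2 x + c2)))
      = exp c1 * exp c2 * cint w1 w2 (\<lambda>x. exp (u1 x + u2 x + v1 x + v2 x))"
    unfolding cint_def by simp_all
qed

theorem proposition1:
  fixes N n1 n2 :: nat and \<kappa> lam :: real and w1 w2 :: pt
    and p1 p2 :: "nat \<Rightarrow> pt" and u1 u2 v1 v2 :: "pt \<Rightarrow> real"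
  assumes N: "N \<ge> 2" and kappa: "\<kappa> > 1" and lam: "lam > 0"
    and lat: "lattice_ok w1 w2"
    and pts1: "\<forall>s\<in>{1..n1}. p1 s \<in> cell w1 w2"
    and pts2: "\<forall>s\<in>{1..n2}. p2 s \<in> cell w1 w2"
    and u1: "u0_sol w1 w2 n1 p1 u1" and u2: "u0_sol w1 w2 n2 p2 u2"
    and adm: "admissible N \<kappa> lam w1 w2 n1 n2 u1 u2 v1 v2"
    and int1: "set_integrable lborel (cell w1 w2) (\<lambda>x. exp (2 * u1 x + 2 * v1 x))"
    and int2: "set_integrable lborel (cell w1 w2) (\<lambda>x. exp (2 * u2 x + 2 * v2 x))"
  defines "b1 \<equiv> bb1 N \<kappa> n1 n2" and "b2 \<equiv> bb2 N \<kappa> n1 n2"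
    and "f1 \<equiv> ff1 N \<kappa> lam (bb1 N \<kappa> n1 n2)
             (cint w1 w2 (\<lambda>x. exp (u1 x + v1 x)))
             (cint w1 w2 (\<lambda>x. exp (2 * u1 x + 2 * v1 x)))
             (cint w1 w2 (\<lambda>x. exp (u1 x + u2 x + v1 x + v2 x)))"
    and "f2 \<equiv> ff2 N \<kappa> lam (bb2 N \<kappa> n1 n2)
             (cint w1 w2 (\<lambda>x. exp (u2 x + v2 x)))
             (cint w1 w2 (\<lambda>x. exp (2 * u2 x + 2 * v2 x)))
             (cint w1 w2 (\<lambda>x. exp (u1 x + u2 x + v1 x + v2 x)))"
  shows "(\<exists>!X0. X0 > 0 \<and> X0 - f1 (f2 X0) = 0) \<and>
    (\<forall>X0 c1 c2. X0 > 0 \<and> X0 - f1 (f2 X0) = 0 \<and> exp c1 = X0 \<and> exp c2 = f2 X0 \<longrightarrow>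
      (real N - 1 + \<kappa>) * cint w1 w2 (\<lambda>x. exp (2 * u1 x + 2 * (v1 x + c1)))
        - real N * cint w1 w2 (\<lambda>x. exp (u1 x + (v1 x + c1)))
        - (\<kappa> - 1) * cint w1 w2 (\<lambda>x. exp (u1 x + u2 x + (v1 x + c1) + (v2 x + c2)))
        + b1 / lam = 0 \<and>
      (1 / (real N - 1) + \<kappa>) * cint w1 w2 (\<lambda>x. exp (2 * u2 x + 2 * (v2 x + c2)))
        - real N / (real N - 1) * cint w1 w2 (\<lambda>x. exp (u2 x + (v2 x + c2)))
        - (\<kappa> - 1) * cint w1 w2 (\<lambda>x. exp (u1 x + u2 x + (v1 x + c1) + (v2 x + c2)))
        + b2 / lam = 0)"
proof -
  have meas: "u1 \<in> borel_measurable lborel" "v1 \<in> borel_measurable lborel"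
    "u2 \<in> borel_measurable lborel" "v2 \<in> borel_measurable lborel"
    using u1 u2 adm unfolding u0_sol_def admissible_def W12dot_def W12_def L2per_def by simp_all
  have adm_ineqs: "4 * (real N - 1 + \<kappa>) * bb1 N \<kappa> n1 n2 / ((real N)\<^sup>2 * lam) * cint w1 w2 (\<lambda>x. exp (2 * u1 x + 2 * v1 x))
      \<le> (cint w1 w2 (\<lambda>x. exp (u1 x + v1 x)))\<^sup>2"
    "4 * (real N - 1) * (1 + (real N - 1) * \<kappa>) * bb2 N \<kappa> n1 n2 / ((real N)\<^sup>2 * lam) *
      cint w1 w2 (\<lambda>x. exp (2 * u2 x + 2 * v2 x)) \<le> (cint w1 w2 (\<lambda>x. exp (u2 x + v2 x)))\<^sup>2"
    using adm unfolding admissible_def by simp_all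
  note hyps = N kappa lam cell_exp_integrals_pos[OF lat meas(1,2) int1]
    cell_exp_integrals_pos[OF lat meas(3,4) int2] cell_exp_cross_integral[OF lat meas int1 int2]
    bb1_nonneg[OF kappa N] bb2_nonneg[OF kappa N] adm_ineqs
  show ?thesis
  proof (intro conjI allI impI)
    show "\<exists>!X0. X0 > 0 \<and> X0 - f1 (f2 X0) = 0"
      unfolding f1_def f2_def using ff_composition_unique_fixed_point[OF hyps] by simp
  next
    fix X0 c1 c2
    assume "X0 > 0 \<and> X0 - f1 (f2 X0) = 0 \<and> exp c1 = X0 \<and> exp c2 = f2 X0"
    then have fixed: "X0 = f1 (f2 X0)" "0 \<le> X0" and shift: "exp c1 = X0" "exp c2 = f2 X0"
      by auto
    then have "0 \<le> f2 X0"
      by (metis exp_ge_zero)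
    show "(real N - 1 + \<kappa>) * cint w1 w2 (\<lambda>x. exp (2 * u1 x + 2 * (v1 x + c1)))
        - real N * cint w1 w2 (\<lambda>x. exp (u1 x + (v1 x + c1)))
        - (\<kappa> - 1) * cint w1 w2 (\<lambda>x. exp (u1 x + u2 x + (v1 x + c1) + (v2 x + c2)))
        + b1 / lam = 0"
      unfolding cint_exp_shift(3) unfolding cint_exp_shift(1,2) shift b1_def
      by (rule ff1_root[OF hyps \<open>0 \<le> f2 X0\<close>]) (use fixed in \<open>simp only: f1_def\<close>)
    show "(1 / (real N - 1) + \<kappa>) * cint w1 w2 (\<lambda>x. exp (2 * u2 x + 2 * (v2 x + c2)))
        - real N / (real N - 1) * cint w1 w2 (\<lambda>x. exp (u2 x + (v2 x + c2)))
        - (\<kappa> - 1) * cint w1 w2 (\<lambda>x. exp (u1 x + u2 x + (v1 x + c1) + (v2 x + c2)))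
        + b2 / lam = 0"
      unfolding cint_exp_shift(3) unfolding cint_exp_shift(1,2) shift b2_def
      by (rule ff2_root[OF hyps \<open>0 \<le> X0\<close>]) (simp only: f2_def)
  qed
qed

end
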